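(* Let $t\geq 2$ and $n\geq 1$ be integers and let $\mathcal{F}\subseteq[t]^n$ be a family for which every coordinate $i\in[n]$ is separating. Then $|\mathcal{F}|=\Omega(\sqrt{n})$.
   Context: For positive integers $n,t$, $[n]=\{1,\dots,n\}$ and $[t]^n$ is the set of functions $f:[n]\to[t]$, partially ordered by $f\leq g$ iff $f(i)\leq g(i)$ for all $i$. For $f\in[t]^n$ and $i\in[n]$, $D_i(f)\in[t]^{n-1}$ is the function obtained by deleting coordinate $i$: $D_i(f)(x)=f(x)$ for $1\leq x<i$ and $D_i(f)(x)=f(x+1)$ for $i\leq x\leq n-1$. A coordinate $i\in[n]$ is separating for $\mathcal{F}\subseteq[t]^n$ if there exist distinct $f,f'\in\mathcal{F}$ with $D_i(f)\leq D_i(f')$ and $f(i)>f'(i)$. *)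

theory Defs
  imports Complex_Main
begin

text \<open>The grid [t]^n: functions [n] -> [t], represented as functions nat => nat
  that take values in {1..t} on {1..n} and are 0 outside {1..n} (canonical representative).\<close>
definition cube :: "nat \<Rightarrow> nat \<Rightarrow> (nat \<Rightarrow> nat) set" where
  "cube t n = {f. (\<forall>i. 1 \<le> i \<and> i \<le> n \<longrightarrow> 1 \<le> f i \<and> f i \<le> t)
                 \<and> (\<forall>i. \<not> (1 \<le> i \<and> i \<le> n) \<longrightarrow> f i = 0)}"

definition le_on :: "nat \<Rightarrow> (nat \<Rightarrow> nat) \<Rightarrow> (nat \<Rightarrow> nat) \<Rightarrow> bool" where
  "le_on m f g \<longleftrightarrow> (\<forall>x. 1 \<le> x \<and> x \<le> m \<longrightarrow> f x \<le> g x)"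

definition del_coord :: "nat \<Rightarrow> nat \<Rightarrow> (nat \<Rightarrow> nat) \<Rightarrow> (nat \<Rightarrow> nat)" where
  "del_coord n i f = (\<lambda>x. if 1 \<le> x \<and> x < i then f x
                          else if i \<le> x \<and> x \<le> n - 1 \<and> 1 \<le> x then f (x + 1) else 0)"

definition separating :: "nat \<Rightarrow> (nat \<Rightarrow> nat) set \<Rightarrow> nat \<Rightarrow> bool" where
  "separating n F i \<longleftrightarrow> (\<exists>f\<in>F. \<exists>f'\<in>F. f \<noteq> f' \<and>
      le_on (n - 1) (del_coord n i f) (del_coord n i f') \<and> f i > f' i)"

end

theory Submission
  imports Defs
begin

text \<open>A separating coordinate i comes with a witness pair (f, f') in F \<times> F, where f' dominates f
  on every coordinate except i, and f exceeds f' at i. So i is the only coordinate at which f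
  exceeds f', and the witness pair determines i. Hence the n coordinates have pairwise distinct
  witnesses, giving n \<le> |F|^2.\<close>

lemma finite_cube: "finite (cube t n)"
proof -
  have "cube t n \<subseteq> {f. \<forall>x. (x \<in> {1..n} \<longrightarrow> f x \<in> {1..t}) \<and> (x \<notin> {1..n} \<longrightarrow> f x = 0)}"
    unfolding cube_def by auto
  moreover have "finite {f. \<forall>x. (x \<in> {1..n} \<longrightarrow> f x \<in> {1..t}) \<and> (x \<notin> {1..n} \<longrightarrow> f x = (0::nat))}"
    by (rule finite_set_of_finite_funs) auto
  ultimately show ?thesis
    by (rule finite_subset)
qed

lemma le_on_del_coord_imp_le:
  assumes le: "le_on (n - 1) (del_coord n i f) (del_coord n i f')"
    and i: "i \<in> {1..n}" and y: "y \<in> {1..n}" and "y \<noteq> i"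
  shows "f y \<le> f' y"
proof (cases "y < i")
  case True
  then have "del_coord n i f y \<le> del_coord n i f' y"
    using le i y unfolding le_on_def by auto
  with True y show ?thesis
    unfolding del_coord_def by simp
next
  case False
  with \<open>y \<noteq> i\<close> have "i < y" by simp
  then have "1 \<le> y - 1 \<and> y - 1 \<le> n - 1"
    using i y by auto
  then have "del_coord n i f (y - 1) \<le> del_coord n i f' (y - 1)"
    using le unfolding le_on_def by blast
  moreover have "del_coord n i g (y - 1) = g y" for g
    using \<open>i < y\<close> i y unfolding del_coord_def by auto
  ultimately show ?thesis
    by simp
qed

definition separating_pair :: "nat \<Rightarrow> nat \<Rightarrow> (nat \<Rightarrow> nat) \<times> (nat \<Rightarrow> nat) \<Rightarrow> bool" where
  "separating_pair n i p \<longleftrightarrow>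
     le_on (n - 1) (del_coord n i (fst p)) (del_coord n i (snd p)) \<and> fst p i > snd p i"

lemma separating_imp_separating_pair:
  assumes "separating n F i"
  shows "\<exists>p \<in> F \<times> F. separating_pair n i p"
proof -
  from assms obtain f f' where "f \<in> F" "f' \<in> F"
      "le_on (n - 1) (del_coord n i f) (del_coord n i f')" "f i > f' i"
    unfolding separating_def by blast
  then show ?thesis
    unfolding separating_pair_def by (intro bexI[of _ "(f, f')"]) simp_all
qed

lemma separating_pair_coord_unique:
  assumes "separating_pair n i p" and "separating_pair n j p"
    and "i \<in> {1..n}" and "j \<in> {1..n}"
  shows "i = j"
proof (rule ccontr)
  assume "i \<noteq> j"
  then have "fst p j \<le> snd p j"
    using assms(1,3,4) le_on_del_coord_imp_le unfolding separating_pair_def by blast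
  with assms(2) show False
    unfolding separating_pair_def by simp
qed

lemma all_separating_imp_le_card_squared:
  assumes "finite F" and "\<forall>i\<in>{1..n}. separating n F i"
  shows "n \<le> card F ^ 2"
proof -
  have "\<forall>i\<in>{1..n}. \<exists>p. p \<in> F \<times> F \<and> separating_pair n i p"
    using assms(2) separating_imp_separating_pair by blast
  then obtain w where w: "\<forall>i\<in>{1..n}. w i \<in> F \<times> F \<and> separating_pair n i (w i)"
    by (rule bchoice[elim_format]) blast
  have "inj_on w {1..n}"
    using w separating_pair_coord_unique by (intro inj_onI) metis
  moreover have "w ` {1..n} \<subseteq> F \<times> F"
    using w by blast
  ultimately have "card {1..n} \<le> card (F \<times> F)"
    using card_inj_on_le \<open>finite F\<close> by blast
  then show ?thesis
    by (simp add: card_cartesian_product power2_eq_square)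
qed

theorem mainTheorem8:
  "\<exists>c::real. c > 0 \<and>
     (\<forall>t n :: nat. \<forall>F. t \<ge> 2 \<longrightarrow> n \<ge> 1 \<longrightarrow> F \<subseteq> cube t n \<longrightarrow>
        (\<forall>i. 1 \<le> i \<and> i \<le> n \<longrightarrow> separating n F i) \<longrightarrow>
        real (card F) \<ge> c * sqrt (real n))"
proof (intro exI[of _ 1] conjI allI impI)
  fix t n :: nat and F :: "(nat \<Rightarrow> nat) set"
  assume "F \<subseteq> cube t n" and "\<forall>i. 1 \<le> i \<and> i \<le> n \<longrightarrow> separating n F i"
  then have "n \<le> card F ^ 2"
    using all_separating_imp_le_card_squared finite_subset[OF _ finite_cube] by simp
  then have "real n \<le> real (card F) ^ 2"
    by (metis of_nat_le_iff of_nat_power)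
  then show "1 * sqrt (real n) \<le> real (card F)"
    by (simp add: real_le_lsqrt)
qed simp

end
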